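(* Let $f:\mathbb{S}^3\to\mathbb{S}^3\subset\mathbb{H}$ be smooth and let $\Psi=[\tilde u,f]$ be the corresponding unit spinor on $\mathbb{S}^3$. For $a\in\mathrm{Im}\,\mathbb{H}$ let $\xi_a$ be defined by $\xi_a\cdot\Psi=\Psi a$ (explicitly, $\xi_a(g)=g\,f(g)\,a\,f(g)^{-1}$). Then the vector fields $\xi_a$ are divergence-free for all $a\in\mathrm{Im}\,\mathbb{H}$ if and only if for every $g\in\mathbb{S}^3$ the endomorphism $M_g$ of $\mathrm{Im}\,\mathbb{H}$ defined by $M_g(x):=f_*(gx)\,f(g)^{-1}$ is symmetric with respect to the standard Euclidean scalar product on $\mathrm{Im}\,\mathbb{H}\cong\mathbb{R}^3$.
   Context: $\mathbb{S}^3$ is the unit sphere in $\mathbb{H}$ with its round metric and Lie group structure; its Lie algebra is $\mathrm{Im}\,\mathbb{H}$ and $\mathrm{T}_g\mathbb{S}^3=g\,\mathrm{Im}\,\mathbb{H}$ (quaternion products). $u(g)=(gi,gj,gk)$ is the left-invariant orthonormal frame, defining the orientation, and $\tilde u$ is a lift of $u$ to the spin principal bundle. Every spinor is written $\Psi=[\tilde u,f]$ for a function $f:\mathbb{S}^3\to\mathbb{H}$ (spinor module $\mathbb{H}$); the Clifford product of a tangent vector $gx$ ($x\in\mathrm{Im}\,\mathbb{H}$) with $[\tilde u,f]$ is $[\tilde u,xf]$ (left quaternion multiplication) and the quaternionic structure is $[\tilde u,f]a=[\tilde u,fa]$. $f_*(gx)$ denotes the derivative of $f$ in the direction of the tangent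 vector $gx$, and $f_*(gx)f(g)^{-1}$ is a quaternion product. *)

theory Defs
  imports "HOL-Analysis.Analysis"
begin

section \<open>Quaternions, modelled on real^4 (components 1,2,3,4 = real, i, j, k parts)\<close>

type_synonym quat = "real^4"

definition qmult :: "quat \<Rightarrow> quat \<Rightarrow> quat" (infixl "\<otimes>\<^sub>q" 70) where
  "p \<otimes>\<^sub>q q = vector
     [p$1*q$1 - p$2*q$2 - p$3*q$3 - p$4*q$4,
      p$1*q$2 + p$2*q$1 + p$3*q$4 - p$4*q$3,
      p$1*q$3 - p$2*q$4 + p$3*q$1 + p$4*q$2,
      p$1*q$4 + p$2*q$3 - p$3*q$2 + p$4*q$1]"

definition qcnj :: "quat \<Rightarrow> quat" where
  "qcnj p = vector [p$1, - p$2, - p$3, - p$4]"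

definition qinv :: "quat \<Rightarrow> quat" where
  "qinv p = (inverse ((norm p)\<^sup>2)) *\<^sub>R qcnj p"

definition qi :: quat where "qi = vector [0, 1, 0, 0]"
definition qj :: quat where "qj = vector [0, 0, 1, 0]"
definition qk :: quat where "qk = vector [0, 0, 0, 1]"

definition ImH :: "quat set" where
  "ImH = {x. x$1 = 0}"

abbreviation S3 :: "quat set" where
  "S3 \<equiv> sphere 0 1"

text \<open>A map is smooth on an open set if it is differentiable there and all its
  directional-derivative fields are again smooth (coinductively), i.e. it has
  derivatives of all orders.\<close>
coinductive smooth_on :: "'a::real_normed_vector set \<Rightarrow> ('a \<Rightarrow> 'b::real_normed_vector) \<Rightarrow> bool" where
  "f differentiable_on S \<Longrightarrow> (\<forall>v. smooth_on S (\<lambda>x. frechet_derivative f (at x) v))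
     \<Longrightarrow> smooth_on S f"

definition smooth_on_S3 :: "(quat \<Rightarrow> quat) \<Rightarrow> bool" where
  "smooth_on_S3 f \<longleftrightarrow> (\<exists>U. open U \<and> S3 \<subseteq> U \<and> smooth_on U f)"

definition s3_geod :: "quat \<Rightarrow> quat \<Rightarrow> real \<Rightarrow> quat" where
  "s3_geod g v t = cos t *\<^sub>R g + sin t *\<^sub>R v"

definition tan_proj :: "quat \<Rightarrow> quat \<Rightarrow> quat" where
  "tan_proj g w = w - (w \<bullet> g) *\<^sub>R g"

text \<open>Levi-Civita covariant derivative of a vector field xi on S^3 (induced metric)
  in the direction of a unit tangent vector v at g: tangential part of the ambient
  derivative of xi along a curve with initial velocity v.\<close>
definition s3_covderiv :: "(quat \<Rightarrow> quat) \<Rightarrow> quat \<Rightarrow> quat \<Rightarrow> quat" where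
  "s3_covderiv \<xi> g v = tan_proj g (vector_derivative (\<lambda>t. \<xi> (s3_geod g v t)) (at 0))"

text \<open>Divergence: trace of the covariant derivative, computed in the orthonormal
  left-invariant frame (gi, gj, gk).\<close>
definition s3_div :: "(quat \<Rightarrow> quat) \<Rightarrow> quat \<Rightarrow> real" where
  "s3_div \<xi> g = (\<Sum>x\<leftarrow>[qi, qj, qk]. s3_covderiv \<xi> g (g \<otimes>\<^sub>q x) \<bullet> (g \<otimes>\<^sub>q x))"

definition xi_field :: "(quat \<Rightarrow> quat) \<Rightarrow> quat \<Rightarrow> quat \<Rightarrow> quat" where
  "xi_field f a g = g \<otimes>\<^sub>q f g \<otimes>\<^sub>q a \<otimes>\<^sub>q qinv (f g)"

definition Mg :: "(quat \<Rightarrow> quat) \<Rightarrow> quat \<Rightarrow> quat \<Rightarrow> quat" where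
  "Mg f g x = frechet_derivative f (at g) (g \<otimes>\<^sub>q x) \<otimes>\<^sub>q qinv (f g)"

end

theory Submission
  imports Defs
begin

text \<open>Fix \<open>g\<close>, put \<open>p = f g\<close> and \<open>b = p a p\<^sup>-\<^sup>1\<close>; as \<open>a\<close> ranges over \<open>Im \<bbbH>\<close>
  so does \<open>b\<close>. Differentiate \<open>\<xi>\<^sub>a(\<gamma>) = \<gamma> f(\<gamma>) a f(\<gamma>)\<^sup>-\<^sup>1\<close> along the
  great circle \<open>\<gamma>\<close> through \<open>g\<close> with velocity \<open>gx\<close> and take the component along \<open>gx\<close>:
  the derivative of the factor \<open>\<gamma>\<close> contributes \<open>Re b = 0\<close>, and the derivative of
  \<open>f(\<gamma>) a f(\<gamma>)\<^sup>-\<^sup>1\<close> is the commutator \<open>[M\<^sub>g x, b]\<close>, where \<open>M\<^sub>g x\<close> is imaginary because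
  \<open>f\<close> is sphere-valued. Summing over the frame \<open>e = i, j, k\<close> gives
  \<open>div \<xi>\<^sub>a (g) = \<Sum>\<^sub>e \<langle>[M\<^sub>g e, b], e\<rangle> = 2 \<langle>b, \<Sum>\<^sub>e e \<times> M\<^sub>g e\<rangle>\<close>, and \<open>\<Sum>\<^sub>e e \<times> M\<^sub>g e\<close>
  is the axial vector of the skew part of \<open>M\<^sub>g\<close>; it vanishes exactly when \<open>M\<^sub>g\<close> is symmetric.\<close>

lemma vector_4_nth [simp]:
  "(vector [x, y, z, w] :: 'a::zero^4) $ 1 = x"
  "(vector [x, y, z, w] :: 'a::zero^4) $ 2 = y"
  "(vector [x, y, z, w] :: 'a::zero^4) $ 3 = z"
  "(vector [x, y, z, w] :: 'a::zero^4) $ 4 = w"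
  unfolding vector_def by simp_all

lemma quat_eq_iff: "(p::quat) = q \<longleftrightarrow> p$1 = q$1 \<and> p$2 = q$2 \<and> p$3 = q$3 \<and> p$4 = q$4"
  by (simp add: vec_eq_iff forall_4)

lemma sum_UNIV_4: "sum f (UNIV :: 4 set) = f 1 + f 2 + f 3 + f 4"
  unfolding UNIV_4 by (simp add: ac_simps)

lemma inner_quat: "(p::quat) \<bullet> q = p$1 * q$1 + p$2 * q$2 + p$3 * q$3 + p$4 * q$4"
  by (simp add: inner_vec_def sum_UNIV_4)

lemma qmult_nth [simp]:
  "(p \<otimes>\<^sub>q q)$1 = p$1*q$1 - p$2*q$2 - p$3*q$3 - p$4*q$4"
  "(p \<otimes>\<^sub>q q)$2 = p$1*q$2 + p$2*q$1 + p$3*q$4 - p$4*q$3"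
  "(p \<otimes>\<^sub>q q)$3 = p$1*q$3 - p$2*q$4 + p$3*q$1 + p$4*q$2"
  "(p \<otimes>\<^sub>q q)$4 = p$1*q$4 + p$2*q$3 - p$3*q$2 + p$4*q$1"
  by (simp_all add: qmult_def)

lemma qcnj_nth [simp]:
  "qcnj p $ 1 = p$1" "qcnj p $ 2 = - p$2" "qcnj p $ 3 = - p$3" "qcnj p $ 4 = - p$4"
  by (simp_all add: qcnj_def)

lemma qi_qj_qk_nth [simp]:
  "qi$1 = 0" "qi$2 = 1" "qi$3 = 0" "qi$4 = 0"
  "qj$1 = 0" "qj$2 = 0" "qj$3 = 1" "qj$4 = 0"
  "qk$1 = 0" "qk$2 = 0" "qk$3 = 0" "qk$4 = 1"
  by (simp_all add: qi_def qj_def qk_def)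

lemma ImH_iff: "x \<in> ImH \<longleftrightarrow> x$1 = 0"
  by (simp add: ImH_def)

lemma qmult_assoc: "p \<otimes>\<^sub>q q \<otimes>\<^sub>q r = p \<otimes>\<^sub>q (q \<otimes>\<^sub>q r)"
  by (simp add: quat_eq_iff algebra_simps)

lemma qcnj_qmult: "qcnj (p \<otimes>\<^sub>q q) = qcnj q \<otimes>\<^sub>q qcnj p"
  by (simp add: quat_eq_iff algebra_simps)

lemma qcnj_qcnj [simp]: "qcnj (qcnj p) = p"
  by (simp add: quat_eq_iff)

lemma qcnj_ImH: "x \<in> ImH \<Longrightarrow> qcnj x = - x"
  by (simp add: quat_eq_iff ImH_iff)

lemma qmult_minus_right: "p \<otimes>\<^sub>q - q = - (p \<otimes>\<^sub>q q)"
  by (simp add: quat_eq_iff)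

lemma qcnj_qmult_cancel_left: "qcnj p \<otimes>\<^sub>q (p \<otimes>\<^sub>q q) = (p \<bullet> p) *\<^sub>R q"
  by (simp add: quat_eq_iff inner_quat algebra_simps)

lemma qmult_qcnj_cancel_left: "p \<otimes>\<^sub>q (qcnj p \<otimes>\<^sub>q q) = (p \<bullet> p) *\<^sub>R q"
  by (simp add: quat_eq_iff inner_quat algebra_simps)

lemma qmult_qcnj_cancel_right: "q \<otimes>\<^sub>q (p \<otimes>\<^sub>q qcnj p) = (p \<bullet> p) *\<^sub>R q"
  by (simp add: quat_eq_iff inner_quat algebra_simps)

lemma inner_qmult_left: "(g \<otimes>\<^sub>q x) \<bullet> (g \<otimes>\<^sub>q y) = (g \<bullet> g) * (x \<bullet> y)"
  by (simp add: inner_quat algebra_simps)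

lemma inner_qmult_self: "(x \<otimes>\<^sub>q y) \<bullet> x = (x \<bullet> x) * y$1"
  by (simp add: inner_quat algebra_simps)

lemma inner_left_translate: "g \<bullet> (g \<otimes>\<^sub>q x) = (g \<bullet> g) * x$1"
  by (simp add: inner_quat algebra_simps)

lemma qmult_qcnj_nth_1: "(x \<otimes>\<^sub>q qcnj y)$1 = x \<bullet> y"
  by (simp add: inner_quat)

lemma qmult_qcnj_sandwich_nth_1: "(p \<otimes>\<^sub>q a \<otimes>\<^sub>q qcnj p)$1 = (p \<bullet> p) * a$1"
  by (simp add: inner_quat algebra_simps)

lemma qinv_unit: "norm p = 1 \<Longrightarrow> qinv p = qcnj p"
  by (simp add: qinv_def)

lemma bounded_bilinear_qmult: "bounded_bilinear (\<otimes>\<^sub>q)"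
proof -
  have "bilinear (\<otimes>\<^sub>q)"
    unfolding bilinear_def by (auto intro!: linearI simp: quat_eq_iff algebra_simps)
  then show ?thesis
    by (simp add: bilinear_conv_bounded_bilinear)
qed

lemma bounded_linear_qcnj: "bounded_linear qcnj"
  by (auto intro!: linearI simp: quat_eq_iff simp flip: linear_conv_bounded_linear)

lemma unit_conj_image_ImH:
  assumes "p \<bullet> p = 1"
  shows "(\<lambda>a. p \<otimes>\<^sub>q a \<otimes>\<^sub>q qcnj p) ` ImH = ImH"
proof (intro equalityI subsetI)
  fix b assume "b \<in> (\<lambda>a. p \<otimes>\<^sub>q a \<otimes>\<^sub>q qcnj p) ` ImH"
  then obtain a where "a$1 = 0" "b = p \<otimes>\<^sub>q a \<otimes>\<^sub>q qcnj p"
    by (auto simp: ImH_iff)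
  then show "b \<in> ImH"
    using assms by (simp only: ImH_iff qmult_qcnj_sandwich_nth_1 mult_zero_right)
next
  fix b assume "b \<in> ImH"
  then have "qcnj p \<otimes>\<^sub>q b \<otimes>\<^sub>q p \<in> ImH"
    using qmult_qcnj_sandwich_nth_1[of "qcnj p" b] by (simp add: ImH_iff)
  moreover have "b = p \<otimes>\<^sub>q (qcnj p \<otimes>\<^sub>q b \<otimes>\<^sub>q p) \<otimes>\<^sub>q qcnj p"
    by (simp add: qmult_assoc qmult_qcnj_cancel_left qmult_qcnj_cancel_right assms)
  ultimately show "b \<in> (\<lambda>a. p \<otimes>\<^sub>q a \<otimes>\<^sub>q qcnj p) ` ImH"
    by blast
qed

lemma unit_curve_derivative_orthogonal:
  fixes c :: "real \<Rightarrow> 'a::real_inner"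
  assumes c': "(c has_vector_derivative c') (at 0)" and unit: "\<And>t. norm (c t) = 1"
  shows "c' \<bullet> c 0 = 0"
proof -
  have "((\<lambda>t. c t \<bullet> c t) has_vector_derivative c 0 \<bullet> c' + c' \<bullet> c 0) (at 0)"
    using bounded_bilinear.has_vector_derivative[OF bounded_bilinear_inner c' c'] by simp
  moreover have "(\<lambda>t. c t \<bullet> c t) = (\<lambda>t. 1)"
    using unit by (simp add: dot_square_norm)
  ultimately have "((\<lambda>t. 1::real) has_vector_derivative c 0 \<bullet> c' + c' \<bullet> c 0) (at 0)"
    by simp
  then have "c 0 \<bullet> c' + c' \<bullet> c 0 = 0"
    using vector_derivative_unique_at has_vector_derivative_const by blast
  then show ?thesis
    by (simp add: inner_commute)
qed

lemma s3_geod_0 [simp]: "s3_geod g v 0 = g"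
  by (simp add: s3_geod_def)

lemma norm_s3_geod:
  assumes "norm g = 1" "norm v = 1" "g \<bullet> v = 0"
  shows "norm (s3_geod g v t) = 1"
proof -
  have "s3_geod g v t \<bullet> s3_geod g v t
      = (cos t)\<^sup>2 * (g \<bullet> g) + 2 * cos t * sin t * (g \<bullet> v) + (sin t)\<^sup>2 * (v \<bullet> v)"
    by (simp add: s3_geod_def inner_add_left inner_add_right inner_commute power2_eq_square
        algebra_simps)
  also have "\<dots> = 1"
    using assms by (simp add: dot_square_norm)
  finally show ?thesis
    by (simp add: norm_eq_sqrt_inner)
qed

lemma s3_geod_has_vector_derivative: "(s3_geod g v has_vector_derivative v) (at 0)"
proof -
  have "((\<lambda>t. cos t *\<^sub>R g + sin t *\<^sub>R v) has_vector_derivative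
      cos 0 *\<^sub>R 0 + (- sin 0) *\<^sub>R g + (sin 0 *\<^sub>R 0 + cos 0 *\<^sub>R v)) (at 0)"
    by (intro derivative_intros DERIV_cos DERIV_sin)
  then show ?thesis
    by (simp add: s3_geod_def[abs_def])
qed

lemma has_vector_derivative_along_s3_geod:
  assumes "(f has_derivative D) (at g)"
  shows "((\<lambda>t. f (s3_geod g v t)) has_vector_derivative D v) (at 0)"
proof -
  have "((f \<circ> s3_geod g v) has_derivative D \<circ> (\<lambda>t. t *\<^sub>R v)) (at 0)"
    using diff_chain_at[OF s3_geod_has_vector_derivative[unfolded has_vector_derivative_def]]
      assms by simp
  moreover have "D \<circ> (\<lambda>t. t *\<^sub>R v) = (\<lambda>t. t *\<^sub>R D v)"
    using linear_scale[OF has_derivative_linear[OF assms]] by auto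
  ultimately show ?thesis
    by (simp add: has_vector_derivative_def o_def)
qed

lemma sphere_map_derivative_orthogonal:
  assumes D: "(f has_derivative D) (at g)" and "g \<in> S3" and f: "\<forall>h\<in>S3. f h \<in> S3"
    and "g \<bullet> v = 0"
  shows "D v \<bullet> f g = 0"
proof (cases "v = 0")
  case True
  then show ?thesis
    using linear_0[OF has_derivative_linear[OF D]] by simp
next
  case False
  define u where "u = v /\<^sub>R norm v"
  have "norm u = 1" "g \<bullet> u = 0"
    using False \<open>g \<bullet> v = 0\<close> by (simp_all add: u_def)
  then have "D u \<bullet> f (s3_geod g u 0) = 0"
    using \<open>g \<in> S3\<close> f norm_s3_geod
    by (intro unit_curve_derivative_orthogonal[OF has_vector_derivative_along_s3_geod[OF D]]) simp
  moreover have "D v = norm v *\<^sub>R D u"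
    using False linear_scale[OF has_derivative_linear[OF D]] by (simp add: u_def)
  ultimately show ?thesis
    by simp
qed

lemma Mg_in_ImH:
  assumes "f differentiable (at g)" "g \<in> S3" "\<forall>h\<in>S3. f h \<in> S3" "x \<in> ImH"
  shows "Mg f g x \<in> ImH"
proof -
  have "g \<bullet> (g \<otimes>\<^sub>q x) = 0"
    using assms(2,4) by (simp add: inner_left_translate ImH_iff)
  then have "frechet_derivative f (at g) (g \<otimes>\<^sub>q x) \<bullet> f g = 0"
    using assms frechet_derivative_works by (blast intro: sphere_map_derivative_orthogonal)
  moreover have "Mg f g x = frechet_derivative f (at g) (g \<otimes>\<^sub>q x) \<otimes>\<^sub>q qcnj (f g)"
    using assms(2,3) by (simp add: Mg_def qinv_unit)
  ultimately show ?thesis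
    by (simp only: ImH_iff qmult_qcnj_nth_1)
qed

lemma linear_Mg:
  assumes "f differentiable (at g)"
  shows "linear (Mg f g)"
proof -
  have "linear (frechet_derivative f (at g))"
    using assms frechet_derivative_works has_derivative_linear by blast
  moreover have "linear (\<lambda>x. g \<otimes>\<^sub>q x)" "linear (\<lambda>y. y \<otimes>\<^sub>q qinv (f g))"
    using bounded_bilinear.bounded_linear_right[OF bounded_bilinear_qmult]
      bounded_bilinear.bounded_linear_left[OF bounded_bilinear_qmult]
    by (simp_all add: bounded_linear.linear)
  ultimately have "linear ((\<lambda>y. y \<otimes>\<^sub>q qinv (f g)) \<circ> frechet_derivative f (at g) \<circ> (\<lambda>x. g \<otimes>\<^sub>q x))"
    by (intro linear_compose)
  then show ?thesis
    by (simp add: Mg_def[abs_def] o_def)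
qed

lemma conj_variation_eq_commutator:
  fixes p P a :: quat
  assumes pp: "p \<bullet> p = 1" and M: "P \<otimes>\<^sub>q qcnj p \<in> ImH"
  defines "b \<equiv> p \<otimes>\<^sub>q a \<otimes>\<^sub>q qcnj p"
  shows "P \<otimes>\<^sub>q a \<otimes>\<^sub>q qcnj p + p \<otimes>\<^sub>q a \<otimes>\<^sub>q qcnj P
    = (P \<otimes>\<^sub>q qcnj p) \<otimes>\<^sub>q b - b \<otimes>\<^sub>q (P \<otimes>\<^sub>q qcnj p)"
proof -
  have "(P \<otimes>\<^sub>q qcnj p) \<otimes>\<^sub>q b = P \<otimes>\<^sub>q a \<otimes>\<^sub>q qcnj p"
    by (simp add: b_def qmult_assoc qcnj_qmult_cancel_left pp)
  moreover have "b \<otimes>\<^sub>q qcnj (P \<otimes>\<^sub>q qcnj p) = p \<otimes>\<^sub>q a \<otimes>\<^sub>q qcnj P"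
    by (simp add: b_def qcnj_qmult qmult_assoc qcnj_qmult_cancel_left pp)
  ultimately show ?thesis
    by (simp add: qcnj_ImH[OF M] qmult_minus_right)
qed

lemma s3_covderiv_xi_field:
  assumes "f differentiable (at g)" and g: "g \<in> S3" and f: "\<forall>h\<in>S3. f h \<in> S3"
    and x: "x \<in> ImH" "norm x = 1" and a: "a \<in> ImH"
  defines "b \<equiv> f g \<otimes>\<^sub>q a \<otimes>\<^sub>q qcnj (f g)"
  shows "s3_covderiv (xi_field f a) g (g \<otimes>\<^sub>q x) \<bullet> (g \<otimes>\<^sub>q x)
    = (Mg f g x \<otimes>\<^sub>q b - b \<otimes>\<^sub>q Mg f g x) \<bullet> x"
proof -
  define v where "v = g \<otimes>\<^sub>q x"
  define p where "p = f g"
  define P where "P = frechet_derivative f (at g) v"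
  have D: "(f has_derivative frechet_derivative f (at g)) (at g)"
    using assms(1) frechet_derivative_works by blast
  have gg: "g \<bullet> g = 1" and pp: "p \<bullet> p = 1"
    using g f by (simp_all add: p_def dot_square_norm)
  have "x \<bullet> x = 1"
    using x(2) by (simp add: dot_square_norm)
  then have vv: "v \<bullet> v = 1" and gv: "g \<bullet> v = 0"
    using x(1) gg by (simp_all add: v_def inner_qmult_left inner_left_translate ImH_iff)
  have "norm v = 1"
    using vv by (simp add: norm_eq_sqrt_inner)
  then have unit_f: "norm (f (s3_geod g v t)) = 1" for t
    using f g gv by (simp add: norm_s3_geod)
  have curve: "((\<lambda>t. f (s3_geod g v t)) has_vector_derivative P) (at 0)"
    unfolding P_def by (rule has_vector_derivative_along_s3_geod[OF D])
  have "((\<lambda>t. s3_geod g v t \<otimes>\<^sub>q f (s3_geod g v t) \<otimes>\<^sub>q a \<otimes>\<^sub>q qcnj (f (s3_geod g v t)))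
      has_vector_derivative v \<otimes>\<^sub>q b + g \<otimes>\<^sub>q (P \<otimes>\<^sub>q a \<otimes>\<^sub>q qcnj p + p \<otimes>\<^sub>q a \<otimes>\<^sub>q qcnj P)) (at 0)"
    by (rule has_vector_derivative_eq_rhs,
        (rule bounded_bilinear.has_vector_derivative[OF bounded_bilinear_qmult]
          bounded_linear.has_vector_derivative[OF bounded_linear_qcnj]
          s3_geod_has_vector_derivative curve has_vector_derivative_const)+)
      (simp add: b_def p_def quat_eq_iff algebra_simps)
  then have "vector_derivative (\<lambda>t. xi_field f a (s3_geod g v t)) (at 0)
      = v \<otimes>\<^sub>q b + g \<otimes>\<^sub>q (P \<otimes>\<^sub>q a \<otimes>\<^sub>q qcnj p + p \<otimes>\<^sub>q a \<otimes>\<^sub>q qcnj P)"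
    using unit_f by (intro vector_derivative_at) (simp add: xi_field_def qinv_unit)
  then have "s3_covderiv (xi_field f a) g v \<bullet> v
      = (v \<otimes>\<^sub>q b) \<bullet> v + (g \<otimes>\<^sub>q (P \<otimes>\<^sub>q a \<otimes>\<^sub>q qcnj p + p \<otimes>\<^sub>q a \<otimes>\<^sub>q qcnj P)) \<bullet> v"
    by (simp add: s3_covderiv_def tan_proj_def inner_diff_left inner_add_left gv)
  also have "\<dots> = (P \<otimes>\<^sub>q a \<otimes>\<^sub>q qcnj p + p \<otimes>\<^sub>q a \<otimes>\<^sub>q qcnj P) \<bullet> x"
  proof -
    have "b$1 = 0"
      using a pp by (simp only: b_def p_def qmult_qcnj_sandwich_nth_1 ImH_iff mult_zero_right)
    then show ?thesis
      by (simp only: v_def inner_qmult_self inner_qmult_left gg mult_zero_right mult_1_left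
          add_0_left)
  qed
  also have "\<dots> = (Mg f g x \<otimes>\<^sub>q b - b \<otimes>\<^sub>q Mg f g x) \<bullet> x"
  proof -
    have "Mg f g x = P \<otimes>\<^sub>q qcnj p"
      using f g by (simp add: Mg_def P_def v_def p_def qinv_unit)
    moreover have "Mg f g x \<in> ImH"
      using assms(1) g f x(1) by (rule Mg_in_ImH)
    ultimately show ?thesis
      using conj_variation_eq_commutator[OF pp] by (simp add: b_def p_def)
  qed
  finally show ?thesis
    by (simp add: v_def)
qed

lemma s3_div_xi_field:
  assumes "f differentiable (at g)" "g \<in> S3" "\<forall>h\<in>S3. f h \<in> S3" "a \<in> ImH"
  defines "b \<equiv> f g \<otimes>\<^sub>q a \<otimes>\<^sub>q qcnj (f g)"
  shows "s3_div (xi_field f a) g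
    = (Mg f g qi \<otimes>\<^sub>q b - b \<otimes>\<^sub>q Mg f g qi) \<bullet> qi
    + (Mg f g qj \<otimes>\<^sub>q b - b \<otimes>\<^sub>q Mg f g qj) \<bullet> qj
    + (Mg f g qk \<otimes>\<^sub>q b - b \<otimes>\<^sub>q Mg f g qk) \<bullet> qk"
proof -
  have "qi \<in> ImH" "qj \<in> ImH" "qk \<in> ImH" "norm qi = 1" "norm qj = 1" "norm qk = 1"
    by (simp_all add: ImH_iff norm_eq_sqrt_inner inner_quat)
  then show ?thesis
    using s3_covderiv_xi_field[OF assms(1-3) _ _ assms(4)] by (simp add: s3_div_def b_def)
qed

lemma commutator_trace_vanishes_iff:
  assumes "u \<in> ImH" "v \<in> ImH" "w \<in> ImH"
  shows "(\<forall>b\<in>ImH. (u \<otimes>\<^sub>q b - b \<otimes>\<^sub>q u) \<bullet> qi + (v \<otimes>\<^sub>q b - b \<otimes>\<^sub>q v) \<bullet> qj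
            + (w \<otimes>\<^sub>q b - b \<otimes>\<^sub>q w) \<bullet> qk = 0)
    \<longleftrightarrow> u \<bullet> qj = qi \<bullet> v \<and> u \<bullet> qk = qi \<bullet> w \<and> v \<bullet> qk = qj \<bullet> w"
proof
  assume vanish: "\<forall>b\<in>ImH. (u \<otimes>\<^sub>q b - b \<otimes>\<^sub>q u) \<bullet> qi + (v \<otimes>\<^sub>q b - b \<otimes>\<^sub>q v) \<bullet> qj
            + (w \<otimes>\<^sub>q b - b \<otimes>\<^sub>q w) \<bullet> qk = 0"
  have "qi \<in> ImH" "qj \<in> ImH" "qk \<in> ImH"
    by (simp_all add: ImH_iff)
  then show "u \<bullet> qj = qi \<bullet> v \<and> u \<bullet> qk = qi \<bullet> w \<and> v \<bullet> qk = qj \<bullet> w"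
    using vanish[rule_format, of qi] vanish[rule_format, of qj] vanish[rule_format, of qk] assms
    by (simp add: inner_quat ImH_iff)
qed (use assms in \<open>auto simp: inner_quat ImH_iff algebra_simps\<close>)

lemma linear_symmetric_on_ImH_iff:
  assumes "linear M"
  shows "(\<forall>x\<in>ImH. \<forall>y\<in>ImH. M x \<bullet> y = x \<bullet> M y)
    \<longleftrightarrow> M qi \<bullet> qj = qi \<bullet> M qj \<and> M qi \<bullet> qk = qi \<bullet> M qk \<and> M qj \<bullet> qk = qj \<bullet> M qk"
proof
  assume "\<forall>x\<in>ImH. \<forall>y\<in>ImH. M x \<bullet> y = x \<bullet> M y"
  moreover have "qi \<in> ImH" "qj \<in> ImH" "qk \<in> ImH"
    by (simp_all add: ImH_iff)
  ultimately show "M qi \<bullet> qj = qi \<bullet> M qj \<and> M qi \<bullet> qk = qi \<bullet> M qk \<and> M qj \<bullet> qk = qj \<bullet> M qk"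
    by blast
next
  assume sym: "M qi \<bullet> qj = qi \<bullet> M qj \<and> M qi \<bullet> qk = qi \<bullet> M qk \<and> M qj \<bullet> qk = qj \<bullet> M qk"
  have expand: "M x = x$2 *\<^sub>R M qi + x$3 *\<^sub>R M qj + x$4 *\<^sub>R M qk" if "x \<in> ImH" for x
  proof -
    have "x = x$2 *\<^sub>R qi + x$3 *\<^sub>R qj + x$4 *\<^sub>R qk"
      using that by (simp add: quat_eq_iff ImH_iff)
    then have "M x = M (x$2 *\<^sub>R qi + x$3 *\<^sub>R qj + x$4 *\<^sub>R qk)"
      by (rule arg_cong)
    then show ?thesis
      by (simp only: linear_add[OF assms] linear_scale[OF assms])
  qed
  show "\<forall>x\<in>ImH. \<forall>y\<in>ImH. M x \<bullet> y = x \<bullet> M y"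
  proof (intro ballI)
    fix x y assume "x \<in> ImH" "y \<in> ImH"
    then show "M x \<bullet> y = x \<bullet> M y"
      unfolding expand[OF \<open>x \<in> ImH\<close>] expand[OF \<open>y \<in> ImH\<close>]
      using sym by (simp add: inner_quat ImH_iff algebra_simps)
  qed
qed

lemma s3_div_xi_field_vanishes_iff_Mg_symmetric:
  assumes "f differentiable (at g)" "g \<in> S3" "\<forall>h\<in>S3. f h \<in> S3"
  shows "(\<forall>a\<in>ImH. s3_div (xi_field f a) g = 0)
    \<longleftrightarrow> (\<forall>x\<in>ImH. \<forall>y\<in>ImH. Mg f g x \<bullet> y = x \<bullet> Mg f g y)"
proof -
  let ?M = "Mg f g"
  have "f g \<bullet> f g = 1"
    using assms(2,3) by (simp add: dot_square_norm)
  then have "(\<forall>a\<in>ImH. s3_div (xi_field f a) g = 0)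
    \<longleftrightarrow> (\<forall>b\<in>(\<lambda>a. f g \<otimes>\<^sub>q a \<otimes>\<^sub>q qcnj (f g)) ` ImH.
          (?M qi \<otimes>\<^sub>q b - b \<otimes>\<^sub>q ?M qi) \<bullet> qi + (?M qj \<otimes>\<^sub>q b - b \<otimes>\<^sub>q ?M qj) \<bullet> qj
          + (?M qk \<otimes>\<^sub>q b - b \<otimes>\<^sub>q ?M qk) \<bullet> qk = 0)"
    using s3_div_xi_field[OF assms] by simp
  also have "\<dots> \<longleftrightarrow> ?M qi \<bullet> qj = qi \<bullet> ?M qj \<and> ?M qi \<bullet> qk = qi \<bullet> ?M qk \<and> ?M qj \<bullet> qk = qj \<bullet> ?M qk"
    using \<open>f g \<bullet> f g = 1\<close>
    by (simp only: unit_conj_image_ImH, intro commutator_trace_vanishes_iff Mg_in_ImH assms)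
      (simp_all add: ImH_iff)
  also have "\<dots> \<longleftrightarrow> (\<forall>x\<in>ImH. \<forall>y\<in>ImH. ?M x \<bullet> y = x \<bullet> ?M y)"
    using linear_symmetric_on_ImH_iff[OF linear_Mg[OF assms(1)]] by simp
  finally show ?thesis .
qed

theorem lemma3p1:
  fixes f :: "quat \<Rightarrow> quat"
  assumes "smooth_on_S3 f"
    and "\<forall>g\<in>S3. f g \<in> S3"
  shows "(\<forall>a\<in>ImH. \<forall>g\<in>S3. s3_div (xi_field f a) g = 0) \<longleftrightarrow>
         (\<forall>g\<in>S3. \<forall>x\<in>ImH. \<forall>y\<in>ImH. Mg f g x \<bullet> y = x \<bullet> Mg f g y)"
proof -
  obtain U where "open U" "S3 \<subseteq> U" "smooth_on U f"
    using assms(1) unfolding smooth_on_S3_def by blast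
  then have "f differentiable (at g)" if "g \<in> S3" for g
    using that differentiable_on_eq_differentiable_at smooth_on.cases by blast
  then have "\<forall>g\<in>S3. (\<forall>a\<in>ImH. s3_div (xi_field f a) g = 0)
      \<longleftrightarrow> (\<forall>x\<in>ImH. \<forall>y\<in>ImH. Mg f g x \<bullet> y = x \<bullet> Mg f g y)"
    using s3_div_xi_field_vanishes_iff_Mg_symmetric assms(2) by blast
  then show ?thesis
    by blast
qed

end
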